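(* In the setting of the context (QFSR5 scheme), suppose the flux $f$ is a quadratic polynomial in $u$, and take $\kappa=1/3$, $\kappa_3=-2/3$, $\theta_2=2/3$, $a=2/15$, $b=16/45$, $c=4/5$. Let $\mathcal{E}_j=(\Phi_{j+1/2}-\Phi_{j-1/2})/h$ evaluated on exact nodal values. Then as $h\to0$, $$\mathcal{E}_j=\frac{d}{dx}f(u(x))\Big|_{x=x_j}+O(h^5).$$
   Context: Let $h>0$, uniform grid $x_i=ih$, $i\in\mathbb{Z}$. Let $u$ be a smooth real function of $x$, $u_i=u(x_i)$; let $f$ (flux) and $D$ (dissipation coefficient) be smooth real functions of one variable. Define successive central differences $(u_x)_i=(u_{i+1}-u_{i-1})/(2h)$, $(u_{xx})_i=((u_x)_{i+1}-(u_x)_{i-1})/(2h)$. For the face $i+1/2$ with $j=i$, $k=i+1$, let $T_j=\frac h4((u_x)_k-(u_x)_j)-\frac{h^2}{4}(u_{xx})_j$, $T_k=\frac h4((u_x)_k-(u_x)_j)-\frac{h^2}{4}(u_{xx})_k$, and reconstructed states $u_L=\kappa\frac{u_j+u_k}{2}+(1-\kappa)[u_j+\frac h2(u_x)_j]+\kappa_3T_j$, $u_R=\kappa\frac{u_j+u_k}{2}+(1-\kappa)[u_k-\frac h2(u_x)_k]+\kappa_3T_k$. Let $\Delta_L=u_L-u_j$, $\Delta_R=u_R-u_k$, and with parameters $a,b,c,\theta_2$ define $L_j=aT_j$, $L_k=aT_k$, $Q_j=b\,f''(u_j)\big(\tfrac{h^2}{4}(u_{xx})_j\big)^2+c\,f''(u_j)\big(\tfrac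 h2(u_x)_j\big)T_j$, $Q_k=b\,f''(u_k)\big(\tfrac{h^2}{4}(u_{xx})_k\big)^2+c\,f''(u_k)\big(-\tfrac h2(u_x)_k\big)T_k$. The reconstructed fluxes are $f_L=f(u_j)+f'(u_j)(\Delta_L+L_j)+\frac{\theta_2}{2}\big(f''(u_j)\Delta_L^2+Q_j\big)$, $f_R=f(u_k)+f'(u_k)(\Delta_R+L_k)+\frac{\theta_2}{2}\big(f''(u_k)\Delta_R^2+Q_k\big)$. Numerical flux: $\Phi_{i+1/2}=\frac12(f_L+f_R)-\frac12D_{i+1/2}(u_R-u_L)$, with $D_{i+1/2}=\bar D(u_i,u_{i+1})$ for a smooth symmetric $\bar D$ with $\bar D(v,v)=D(v)$. *)

theory Defs
  imports "HOL-Analysis.Analysis" "HOL-Library.Landau_Symbols"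
begin

definition smooth1 :: "(real \<Rightarrow> real) \<Rightarrow> bool" where
  "smooth1 g \<longleftrightarrow> (\<exists>G :: nat \<Rightarrow> real \<Rightarrow> real. G 0 = g \<and>
     (\<forall>n x. (G n has_real_derivative G (Suc n) x) (at x)))"

definition smooth2 :: "(real \<Rightarrow> real \<Rightarrow> real) \<Rightarrow> bool" where
  "smooth2 g \<longleftrightarrow> (\<exists>P :: nat \<Rightarrow> nat \<Rightarrow> real \<Rightarrow> real \<Rightarrow> real. P 0 0 = g \<and>
     (\<forall>m n a b. ((\<lambda>s. P m n s b) has_real_derivative P (Suc m) n a b) (at a) \<and>
                ((\<lambda>t. P m n a t) has_real_derivative P m (Suc n) a b) (at b)) \<and>
     (\<forall>m n. continuous_on UNIV (\<lambda>(a, b). P m n a b)))"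

definition nodal :: "(real \<Rightarrow> real) \<Rightarrow> real \<Rightarrow> real \<Rightarrow> int \<Rightarrow> real" where
  "nodal u h x k = u (x + of_int k * h)"

definition cdx :: "(real \<Rightarrow> real) \<Rightarrow> real \<Rightarrow> real \<Rightarrow> int \<Rightarrow> real" where
  "cdx u h x k = (nodal u h x (k + 1) - nodal u h x (k - 1)) / (2 * h)"

definition cdxx :: "(real \<Rightarrow> real) \<Rightarrow> real \<Rightarrow> real \<Rightarrow> int \<Rightarrow> real" where
  "cdxx u h x k = (cdx u h x (k + 1) - cdx u h x (k - 1)) / (2 * h)"

text \<open>QFSR5 numerical flux at the face k+1/2 (j = k, right cell = k+1), with
  general parameters kappa, kappa3, theta2, a, b, c; f' and f'' are the
  derivatives of the flux f.\<close>
definition qfsr_flux ::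
  "real \<Rightarrow> real \<Rightarrow> real \<Rightarrow> real \<Rightarrow> real \<Rightarrow> real \<Rightarrow>
   (real \<Rightarrow> real) \<Rightarrow> (real \<Rightarrow> real \<Rightarrow> real) \<Rightarrow> (real \<Rightarrow> real) \<Rightarrow> real \<Rightarrow> real \<Rightarrow> int \<Rightarrow> real"
where
  "qfsr_flux \<kappa> \<kappa>3 \<theta>2 a b c f Db u h x j =
    (let k = j + 1;
         uj = nodal u h x j; uk = nodal u h x k;
         uxj = cdx u h x j; uxk = cdx u h x k;
         uxxj = cdxx u h x j; uxxk = cdxx u h x k;
         f1 = deriv f; f2 = deriv (deriv f);
         Tj = h / 4 * (uxk - uxj) - h^2 / 4 * uxxj;
         Tk = h / 4 * (uxk - uxj) - h^2 / 4 * uxxk;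
         uL = \<kappa> * (uj + uk) / 2 + (1 - \<kappa>) * (uj + h / 2 * uxj) + \<kappa>3 * Tj;
         uR = \<kappa> * (uj + uk) / 2 + (1 - \<kappa>) * (uk - h / 2 * uxk) + \<kappa>3 * Tk;
         \<Delta>L = uL - uj; \<Delta>R = uR - uk;
         Lj = a * Tj; Lk = a * Tk;
         Qj = b * f2 uj * (h^2 / 4 * uxxj)^2 + c * f2 uj * (h / 2 * uxj) * Tj;
         Qk = b * f2 uk * (h^2 / 4 * uxxk)^2 + c * f2 uk * (- (h / 2 * uxk)) * Tk;
         fL = f uj + f1 uj * (\<Delta>L + Lj) + \<theta>2 / 2 * (f2 uj * \<Delta>L^2 + Qj);
         fR = f uk + f1 uk * (\<Delta>R + Lk) + \<theta>2 / 2 * (f2 uk * \<Delta>R^2 + Qk)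
     in (fL + fR) / 2 - Db uj uk * (uR - uL) / 2)"

definition qfsr5_residual ::
  "(real \<Rightarrow> real) \<Rightarrow> (real \<Rightarrow> real \<Rightarrow> real) \<Rightarrow> (real \<Rightarrow> real) \<Rightarrow> real \<Rightarrow> real \<Rightarrow> real"
where
  "qfsr5_residual f Db u x h =
    (qfsr_flux (1/3) (-2/3) (2/3) (2/15) (16/45) (4/5) f Db u h x 0
     - qfsr_flux (1/3) (-2/3) (2/3) (2/15) (16/45) (4/5) f Db u h x (-1)) / h"

end

theory Submission
  imports Defs
begin

(* For a quadratic flux the QFSR5 flux at a face splits into a central part, a quadratic
   polynomial in the six surrounding nodal values, and the dissipation
   Db(u_j, u_(j+1)) (u_R - u_L) / 2, where u_R - u_L is 1/24 of the fifth forward difference of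
   the nodal values.
   Replacing u by its Taylor polynomial of degree five changes each central part by O(h^6), and
   for quintic data the central parts at x + h/2 and x - h/2 differ by exactly
   h (f(u))'(x) + O(h^7).  In the dissipative part the fifth differences at the two faces differ
   by a sixth difference, which is O(h^6), the fifth difference itself is O(h^5), and
   Db(u_j, u_(j+1)) changes by O(h) from one face to the next; so this part is O(h^6) as well. *)

lemma power_bigo_one: "(\<lambda>h::real. h ^ n) \<in> O[at_right 0](\<lambda>_. 1)"
  by (rule bigoI_tendsto[where c = "0 ^ n"]) (auto intro!: tendsto_eq_intros)

lemma power_bigo_power:
  assumes "m \<le> n"
  shows "(\<lambda>h::real. h ^ n) \<in> O[at_right 0](\<lambda>h. h ^ m)"
proof -
  have "(\<lambda>h::real. h ^ m * h ^ (n - m)) \<in> O[at_right 0](\<lambda>h. h ^ m)"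
    by (rule landau_o.big_1_mult[OF landau_o.big_refl power_bigo_one])
  then show ?thesis
    using assms by (simp add: power_add[symmetric])
qed

lemma bigo_divide_by_var:
  assumes "F \<in> O[at_right 0](\<lambda>h. h ^ Suc n)"
  shows "(\<lambda>h. F h / h) \<in> O[at_right 0](\<lambda>h::real. h ^ n)"
proof -
  obtain C where "eventually (\<lambda>h. norm (F h) \<le> C * norm (h ^ Suc n)) (at_right 0)"
    using assms by (auto elim: landau_o.bigE)
  then have "eventually (\<lambda>h. norm (F h / h) \<le> C * norm (h ^ n)) (at_right 0)"
    using eventually_at_right_less[of "0::real"]
  proof eventually_elim
    case (elim h)
    then show ?case by (simp add: abs_mult divide_le_eq ac_simps)
  qed
  then show ?thesis by (rule bigoI)
qed

lemma has_real_derivative_imp_bigo: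
  assumes "(\<phi> has_real_derivative d) (at 0)"
  shows "(\<lambda>h. \<phi> h - \<phi> 0) \<in> O[at_right 0](\<lambda>h. h)"
proof (rule bigoI_tendsto)
  have "((\<lambda>h. (\<phi> h - \<phi> 0) / (h - 0)) \<longlongrightarrow> d) (at 0)"
    using assms by (simp add: has_field_derivative_iff)
  then show "((\<lambda>h. (\<phi> h - \<phi> 0) / h) \<longlongrightarrow> d) (at_right 0)"
    by (simp add: filterlim_at_split)
  show "eventually (\<lambda>h::real. h \<noteq> 0) (at_right 0)"
    by (rule eventually_mono[OF eventually_at_right_less]) simp
qed

(* F = G + O(h^n) as h \<rightarrow> 0+; requiring G to be bounded makes the relation closed under
   products. *)
definition agree_upto :: "nat \<Rightarrow> (real \<Rightarrow> real) \<Rightarrow> (real \<Rightarrow> real) \<Rightarrow> bool" where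
  "agree_upto n F G \<longleftrightarrow>
     (\<lambda>h. F h - G h) \<in> O[at_right 0](\<lambda>h. h ^ n) \<and> G \<in> O[at_right 0](\<lambda>_. 1)"

lemma agree_upto_bounded:
  assumes "agree_upto n F G"
  shows "F \<in> O[at_right 0](\<lambda>_. 1)"
proof -
  have "(\<lambda>h. F h - G h) \<in> O[at_right 0](\<lambda>_. 1)"
    using assms power_bigo_one landau_o.big_trans unfolding agree_upto_def by blast
  moreover have "G \<in> O[at_right 0](\<lambda>_. 1)"
    using assms unfolding agree_upto_def by blast
  ultimately have "(\<lambda>h. (F h - G h) + G h) \<in> O[at_right 0](\<lambda>_. 1)"
    by (rule sum_in_bigo(1))
  then show ?thesis by simp
qed

lemma agree_upto_const: "agree_upto n (\<lambda>_. c) (\<lambda>_. c)"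
  by (simp add: agree_upto_def)

lemma agree_upto_add:
  "agree_upto n F G \<Longrightarrow> agree_upto n F' G' \<Longrightarrow> agree_upto n (\<lambda>h. F h + F' h) (\<lambda>h. G h + G' h)"
  unfolding agree_upto_def by (auto dest: sum_in_bigo(1) simp: add_diff_add)

lemma agree_upto_uminus:
  assumes "agree_upto n F G"
  shows "agree_upto n (\<lambda>h. - F h) (\<lambda>h. - G h)"
proof -
  have "(\<lambda>h. - F h - - G h) = (\<lambda>h. - (F h - G h))"
    by (rule ext) simp
  then show ?thesis
    using assms unfolding agree_upto_def by (simp only: landau_o.big.uminus_in_iff)
qed

lemma agree_upto_diff:
  "agree_upto n F G \<Longrightarrow> agree_upto n F' G' \<Longrightarrow> agree_upto n (\<lambda>h. F h - F' h) (\<lambda>h. G h - G' h)"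
  using agree_upto_add[of n F G "\<lambda>h. - F' h" "\<lambda>h. - G' h"] agree_upto_uminus[of n F' G'] by simp

lemma agree_upto_mult:
  assumes "agree_upto n F G" "agree_upto n F' G'"
  shows "agree_upto n (\<lambda>h. F h * F' h) (\<lambda>h. G h * G' h)"
proof -
  have F: "F \<in> O[at_right 0](\<lambda>_. 1)" by (rule agree_upto_bounded[OF assms(1)])
  have d: "(\<lambda>h. F h - G h) \<in> O[at_right 0](\<lambda>h. h ^ n)" "G \<in> O[at_right 0](\<lambda>_. 1)"
    and d': "(\<lambda>h. F' h - G' h) \<in> O[at_right 0](\<lambda>h. h ^ n)" "G' \<in> O[at_right 0](\<lambda>_. 1)"
    using assms unfolding agree_upto_def by blast+
  have "(\<lambda>h. (F' h - G' h) * F h + (F h - G h) * G' h) \<in> O[at_right 0](\<lambda>h. h ^ n)"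
    by (rule sum_in_bigo(1)[OF landau_o.big_1_mult[OF d'(1) F] landau_o.big_1_mult[OF d(1) d'(2)]])
  moreover have "F h * F' h - G h * G' h = (F' h - G' h) * F h + (F h - G h) * G' h" for h
    by (simp add: algebra_simps)
  moreover have "(\<lambda>h. G h * G' h) \<in> O[at_right 0](\<lambda>_. 1 * 1)"
    by (rule landau_o.big.mult[OF d(2) d'(2)])
  ultimately show ?thesis
    unfolding agree_upto_def by simp
qed

lemma agree_upto_divide:
  "agree_upto n F G \<Longrightarrow> agree_upto n (\<lambda>h. F h / c) (\<lambda>h. G h / c)"
  using agree_upto_mult[OF _ agree_upto_const, of n F G "1 / c"] by simp

lemma agree_upto_power:
  "agree_upto n F G \<Longrightarrow> agree_upto n (\<lambda>h. F h ^ k) (\<lambda>h. G h ^ k)"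
  by (induction k) (simp_all add: agree_upto_const agree_upto_mult)

lemmas agree_upto_intros =
  agree_upto_const agree_upto_add agree_upto_diff agree_upto_uminus agree_upto_mult
  agree_upto_divide agree_upto_power

lemma taylor_agree_upto:
  fixes G :: "nat \<Rightarrow> real \<Rightarrow> real"
  assumes G: "\<And>m y. (G m has_real_derivative G (Suc m) y) (at y)"
  shows "agree_upto n (\<lambda>h. G 0 (x + t * h)) (\<lambda>h. \<Sum>m<n. G m x / fact m * (t * h) ^ m)"
proof -
  have "continuous_on (cball x \<bar>t\<bar>) (G n)"
    using G by (intro continuous_at_imp_continuous_on) (blast intro: DERIV_isCont)
  then have "bounded (G n ` cball x \<bar>t\<bar>)"
    by (intro compact_imp_bounded compact_continuous_image) auto
  then obtain M where "\<forall>z \<in> G n ` cball x \<bar>t\<bar>. norm z \<le> M"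
    unfolding bounded_iff by blast
  then have M: "\<And>y. y \<in> cball x \<bar>t\<bar> \<Longrightarrow> \<bar>G n y\<bar> \<le> M"
    by simp
  have "eventually (\<lambda>h. \<bar>G 0 (x + t * h) - (\<Sum>m<n. G m x / fact m * (t * h) ^ m)\<bar>
      \<le> M / fact n * \<bar>t\<bar> ^ n * \<bar>h ^ n\<bar>) (at_right 0)"
    using eventually_at_right_real[OF zero_less_one]
  proof (rule eventually_mono)
    fix h :: real assume h: "h \<in> {0<..<1}"
    obtain \<xi> where \<xi>: "\<bar>\<xi>\<bar> \<le> \<bar>t * h\<bar>"
      and taylor: "G 0 (x + t * h) = (\<Sum>m<n. G m (x + 0) / fact m * (t * h) ^ m)
                                    + G n (x + \<xi>) / fact n * (t * h) ^ n"
      using Maclaurin_all_le[of "\<lambda>m s. G m (x + s)" "\<lambda>s. G 0 (x + s)" "t * h" n]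
        DERIV_chain2[OF G DERIV_add[OF DERIV_const DERIV_ident]]
      by auto
    have "\<bar>\<xi>\<bar> \<le> \<bar>t\<bar>"
      using \<xi> h by (simp add: abs_mult) (metis abs_ge_zero less_eq_real_def mult_left_le order_trans)
    then have "\<bar>G n (x + \<xi>)\<bar> \<le> M"
      by (intro M) (simp add: dist_real_def)
    then have "\<bar>G n (x + \<xi>)\<bar> / fact n * \<bar>t * h\<bar> ^ n \<le> M / fact n * \<bar>t * h\<bar> ^ n"
      by (intro mult_right_mono divide_right_mono) simp_all
    then show "\<bar>G 0 (x + t * h) - (\<Sum>m<n. G m x / fact m * (t * h) ^ m)\<bar>
      \<le> M / fact n * \<bar>t\<bar> ^ n * \<bar>h ^ n\<bar>"
      unfolding taylor by (simp add: abs_mult power_abs power_mult_distrib mult.assoc)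
  qed
  then have "(\<lambda>h. G 0 (x + t * h) - (\<Sum>m<n. G m x / fact m * (t * h) ^ m))
      \<in> O[at_right 0](\<lambda>h. h ^ n)"
    unfolding real_norm_def[symmetric] by (rule bigoI)
  moreover have "(\<lambda>h. \<Sum>m<n. G m x / fact m * (t * h) ^ m) \<in> O[at_right 0](\<lambda>_. 1)"
    by (intro big_sum_in_bigo) (simp add: power_mult_distrib mult.assoc power_bigo_one)
  ultimately show ?thesis
    unfolding agree_upto_def by blast
qed

primrec forward_diff :: "nat \<Rightarrow> (real \<Rightarrow> real) \<Rightarrow> real \<Rightarrow> real" where
  "forward_diff 0 g y = g y"
| "forward_diff (Suc n) g y = forward_diff n g (y + 1) - forward_diff n g y"

lemma agree_upto_forward_diff:
  assumes "\<And>t. agree_upto n (\<lambda>h. U h t) (\<lambda>h. V h t)"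
  shows "agree_upto n (\<lambda>h. forward_diff m (U h) t) (\<lambda>h. forward_diff m (V h) t)"
  using assms by (induction m arbitrary: t) (simp_all add: agree_upto_diff)

lemma forward_diff_quintic:
  fixes c0 c1 c2 c3 c4 c5 :: real
  assumes p: "\<And>t. p t = c0 + c1 * t + c2 * t ^ 2 + c3 * t ^ 3 + c4 * t ^ 4 + c5 * t ^ 5"
  shows "forward_diff 5 p (-3) = 120 * c5" and "forward_diff 6 p (-3) = 0"
  by (simp_all add: p eval_nat_numeral)

lemma nodal_rescale: "nodal (\<lambda>t. u (x + (of_int j + t) * h)) 1 0 k = nodal u h x (j + k)"
  by (simp add: nodal_def algebra_simps)

lemma cdx_rescale:
  "h \<noteq> 0 \<Longrightarrow> cdx (\<lambda>t. u (x + (of_int j + t) * h)) 1 0 k = h * cdx u h x (j + k)"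
  by (simp add: cdx_def nodal_rescale add_diff_eq add.assoc)

lemma cdxx_rescale:
  "h \<noteq> 0 \<Longrightarrow> cdxx (\<lambda>t. u (x + (of_int j + t) * h)) 1 0 k = h\<^sup>2 * cdxx u h x (j + k)"
  unfolding cdxx_def cdx_rescale
  by (simp add: power2_eq_square add_diff_eq add.assoc field_simps)

lemma qfsr_flux_rescale:
  assumes "h \<noteq> 0"
  shows "qfsr_flux \<kappa> \<kappa>3 \<theta>2 a b c f Db u h x j
       = qfsr_flux \<kappa> \<kappa>3 \<theta>2 a b c f Db (\<lambda>t. u (x + (of_int j + t) * h)) 1 0 0"
proof -
  have "h / 4 * (p - q) = 1 / 4 * (h * p - h * q)" "h / 2 * p = 1 / 2 * (h * p)"
    "h\<^sup>2 / 4 * r = 1\<^sup>2 / 4 * (h\<^sup>2 * r)" for p q r :: real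
    by (simp_all add: field_simps)
  then show ?thesis
    unfolding qfsr_flux_def Let_def nodal_rescale cdx_rescale[OF assms] cdxx_rescale[OF assms]
    by (simp only: add_0_left add_0_right)
qed

lemma qfsr5_flux_split:
  assumes "h \<noteq> 0"
  shows "qfsr_flux (1/3) (-2/3) \<theta>2 a b c f Db u h x j
     = qfsr_flux (1/3) (-2/3) \<theta>2 a b c f (\<lambda>_ _. 0) u h x j
       - Db (nodal u h x j) (nodal u h x (j + 1)) * forward_diff 5 (\<lambda>t. u (x + t * h)) (of_int j - 2) / 48"
proof -
  have split: "X = Y / 24 \<Longrightarrow> A - D * X / 2 = (A - 0 * X / 2) - D * Y / 48" for A D X Y :: real
    by simp
  show ?thesis
    unfolding qfsr_flux_def Let_def
    by (rule split)
      (use assms in \<open>simp add: cdxx_def cdx_def nodal_def eval_nat_numeral field_simps\<close>)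
qed

lemma deriv_quadratic:
  fixes f :: "real \<Rightarrow> real"
  assumes "\<And>v. f v = \<alpha> + \<beta> * v + \<gamma> * v\<^sup>2"
  shows "deriv f = (\<lambda>v. \<beta> + 2 * \<gamma> * v)" "deriv (deriv f) = (\<lambda>v. 2 * \<gamma>)"
proof -
  have f: "f = (\<lambda>v. \<alpha> + \<beta> * v + \<gamma> * v\<^sup>2)" using assms by blast
  show d1: "deriv f = (\<lambda>v. \<beta> + 2 * \<gamma> * v)"
    unfolding f by (intro ext DERIV_imp_deriv) (auto intro!: derivative_eq_intros)
  show "deriv (deriv f) = (\<lambda>v. 2 * \<gamma>)"
    unfolding d1 by (intro ext DERIV_imp_deriv) (auto intro!: derivative_eq_intros)
qed

lemma qfsr_flux_agree_upto:
  fixes f :: "real \<Rightarrow> real"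
  assumes f: "\<And>v. f v = \<alpha> + \<beta> * v + \<gamma> * v\<^sup>2"
    and UV: "\<And>t. agree_upto n (\<lambda>h. U h t) (\<lambda>h. V h t)"
  shows "agree_upto n (\<lambda>h. qfsr_flux \<kappa> \<kappa>3 \<theta>2 a b c f (\<lambda>_ _. 0) (U h) 1 0 0)
                        (\<lambda>h. qfsr_flux \<kappa> \<kappa>3 \<theta>2 a b c f (\<lambda>_ _. 0) (V h) 1 0 0)"
  unfolding qfsr_flux_def Let_def deriv_quadratic(2)[OF f]
  unfolding deriv_quadratic(1)[OF f] cdxx_def cdx_def nodal_def f
  by (intro agree_upto_intros UV)

lemma qfsr5_central_quintic:
  fixes c0 c1 c2 c3 c4 c5 :: real
  assumes f: "\<And>v. f v = \<alpha> + \<beta> * v + \<gamma> * v\<^sup>2"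
    and p: "\<And>t. p t = c0 + c1 * t + c2 * t ^ 2 + c3 * t ^ 3 + c4 * t ^ 4 + c5 * t ^ 5"
  shows "qfsr_flux (1/3) (-2/3) (2/3) (2/15) (16/45) (4/5) f (\<lambda>_ _. 0) (\<lambda>t. p (0 + t)) 1 0 0
       - qfsr_flux (1/3) (-2/3) (2/3) (2/15) (16/45) (4/5) f (\<lambda>_ _. 0) (\<lambda>t. p (-1 + t)) 1 0 0
       = (\<beta> + 2 * \<gamma> * c0) * c1 + \<gamma> * (74/9 * c2 * c5 + 34/5 * c3 * c4 + 632/9 * c4 * c5)"
  unfolding qfsr_flux_def Let_def deriv_quadratic(2)[OF f]
  unfolding deriv_quadratic(1)[OF f] cdxx_def cdx_def nodal_def f p
  by (simp add: field_simps power2_eq_square)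

lemma qfsr5_central_taylor_poly:
  fixes a :: "nat \<Rightarrow> real"
  assumes f: "\<And>v. f v = \<alpha> + \<beta> * v + \<gamma> * v\<^sup>2"
  shows "qfsr_flux (1/3) (-2/3) (2/3) (2/15) (16/45) (4/5) f (\<lambda>_ _. 0)
           (\<lambda>t. \<Sum>m<6. a m * ((0 + t) * h) ^ m) 1 0 0
       - qfsr_flux (1/3) (-2/3) (2/3) (2/15) (16/45) (4/5) f (\<lambda>_ _. 0)
           (\<lambda>t. \<Sum>m<6. a m * ((-1 + t) * h) ^ m) 1 0 0
       = h * ((\<beta> + 2 * \<gamma> * a 0) * a 1)
         + h ^ 7 * (\<gamma> * (74/9 * a 2 * a 5 + 34/5 * a 3 * a 4 + 632/9 * a 4 * a 5 * h\<^sup>2))"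
    (is "?lhs = ?rhs")
proof -
  define q where "q r = a 0 + (a 1 * h) * r + (a 2 * h ^ 2) * r ^ 2 + (a 3 * h ^ 3) * r ^ 3
                        + (a 4 * h ^ 4) * r ^ 4 + (a 5 * h ^ 5) * r ^ 5" for r
  have "(\<Sum>m<6. a m * ((s + t) * h) ^ m) = q (s + t)" for s t
    by (simp add: q_def eval_nat_numeral algebra_simps)
  then have "?lhs = (\<beta> + 2 * \<gamma> * a 0) * (a 1 * h) + \<gamma> * (74/9 * (a 2 * h ^ 2) * (a 5 * h ^ 5)
      + 34/5 * (a 3 * h ^ 3) * (a 4 * h ^ 4) + 632/9 * (a 4 * h ^ 4) * (a 5 * h ^ 5))"
    by (simp only: qfsr5_central_quintic[OF f q_def])
  also have "\<dots> = ?rhs"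
    by (simp add: algebra_simps eval_nat_numeral)
  finally show ?thesis .
qed

lemma qfsr5_central_consistency:
  fixes f :: "real \<Rightarrow> real" and G :: "nat \<Rightarrow> real \<Rightarrow> real"
  assumes f: "\<And>v. f v = \<alpha> + \<beta> * v + \<gamma> * v\<^sup>2"
    and G: "\<And>m y. (G m has_real_derivative G (Suc m) y) (at y)"
  shows "(\<lambda>h. qfsr_flux (1/3) (-2/3) (2/3) (2/15) (16/45) (4/5) f (\<lambda>_ _. 0) (G 0) h x 0
            - qfsr_flux (1/3) (-2/3) (2/3) (2/15) (16/45) (4/5) f (\<lambda>_ _. 0) (G 0) h x (-1)
            - h * ((\<beta> + 2 * \<gamma> * G 0 x) * G 1 x)) \<in> O[at_right 0](\<lambda>h. h ^ 6)"
proof -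
  define C where "C v = qfsr_flux (1/3) (-2/3) (2/3) (2/15) (16/45) (4/5) f (\<lambda>_ _. 0) v 1 0 0"
    for v
  define U where "U s h t = G 0 (x + (s + t) * h)" for s h t
  define a where "a m = G m x / fact m" for m
  define p where "p s h t = (\<Sum>m<6. a m * ((s + t) * h) ^ m)" for s h t
  define R where "R h = h ^ 7 * (\<gamma> * (74/9 * a 2 * a 5 + 34/5 * a 3 * a 4 + 632/9 * a 4 * a 5 * h\<^sup>2))"
    for h
  have "agree_upto 6 (\<lambda>h. C (U s h)) (\<lambda>h. C (p s h))" for s
    unfolding C_def U_def p_def a_def
    by (rule qfsr_flux_agree_upto[OF f]) (rule taylor_agree_upto[of G, OF G])
  then have "(\<lambda>h. (C (U 0 h) - C (U (-1) h)) - (C (p 0 h) - C (p (-1) h))) \<in> O[at_right 0](\<lambda>h. h ^ 6)"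
    using agree_upto_diff unfolding agree_upto_def by (simp add: algebra_simps)
  moreover have "R \<in> O[at_right 0](\<lambda>h. h ^ 6)"
    unfolding R_def
    by (intro landau_o.big_1_mult[OF power_bigo_power] bigoI_tendsto) (auto intro!: tendsto_eq_intros)
  ultimately have remainder: "(\<lambda>h. (C (U 0 h) - C (U (-1) h)) - (C (p 0 h) - C (p (-1) h)) + R h)
      \<in> O[at_right 0](\<lambda>h. h ^ 6)"
    by (rule sum_in_bigo(1))
  have flux: "qfsr_flux (1/3) (-2/3) (2/3) (2/15) (16/45) (4/5) f (\<lambda>_ _. 0) (G 0) h x j
      = C (U (of_int j) h)" if "h \<noteq> 0" for h j
    unfolding C_def U_def by (rule qfsr_flux_rescale[OF that])
  have poly: "C (p 0 h) - C (p (-1) h) = h * ((\<beta> + 2 * \<gamma> * a 0) * a 1) + R h" for h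
    unfolding C_def p_def R_def by (rule qfsr5_central_taylor_poly[OF f])
  have "eventually (\<lambda>h. qfsr_flux (1/3) (-2/3) (2/3) (2/15) (16/45) (4/5) f (\<lambda>_ _. 0) (G 0) h x 0
            - qfsr_flux (1/3) (-2/3) (2/3) (2/15) (16/45) (4/5) f (\<lambda>_ _. 0) (G 0) h x (-1)
            - h * ((\<beta> + 2 * \<gamma> * G 0 x) * G 1 x)
          = (C (U 0 h) - C (U (-1) h)) - (C (p 0 h) - C (p (-1) h)) + R h) (at_right 0)"
    using eventually_at_right_less[of "0::real"]
  proof eventually_elim
    case (elim h)
    then have "h \<noteq> 0" by simp
    from flux[OF this, of 0] flux[OF this, of "-1"] show ?case
      by (simp add: poly a_def)
  qed
  then show ?thesis
    using remainder by (rule landau_o.big.in_cong[THEN iffD2])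
qed

lemma qfsr5_dissipation_coefficients:
  fixes Db :: "real \<Rightarrow> real \<Rightarrow> real"
  assumes u: "(u has_real_derivative u') (at x)"
    and Db_a: "\<And>a b. ((\<lambda>s. Db s b) has_real_derivative Db_a a b) (at a)"
    and Db_b: "\<And>a b. ((\<lambda>t. Db a t) has_real_derivative Db_b a b) (at b)"
  shows "(\<lambda>h. Db (u x) (u (x + h))) \<in> O[at_right 0](\<lambda>_. 1)"
    and "(\<lambda>h. Db (u x) (u (x + h)) - Db (u (x - h)) (u x)) \<in> O[at_right 0](\<lambda>h. h)"
proof -
  define \<phi> where "\<phi> s = Db (u x) (u (x + s))" for s
  define \<psi> where "\<psi> s = Db (u (x - s)) (u x)" for s
  have "((\<lambda>s. u (x + s)) has_real_derivative u' * 1) (at 0)"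
    by (rule DERIV_chain2[where f = u]) (use u in \<open>auto intro!: derivative_eq_intros\<close>)
  from DERIV_chain2[OF Db_b this] have "(\<phi> has_real_derivative Db_b (u x) (u x) * (u' * 1)) (at 0)"
    unfolding \<phi>_def by simp
  then have \<phi>_lin: "(\<lambda>h. \<phi> h - \<phi> 0) \<in> O[at_right 0](\<lambda>h. h)"
    by (rule has_real_derivative_imp_bigo)
  have "((\<lambda>s. u (x - s)) has_real_derivative u' * - 1) (at 0)"
    by (rule DERIV_chain2[where f = u]) (use u in \<open>auto intro!: derivative_eq_intros\<close>)
  from DERIV_chain2[OF Db_a this] have "(\<psi> has_real_derivative Db_a (u x) (u x) * (u' * - 1)) (at 0)"
    unfolding \<psi>_def by simp
  then have \<psi>_lin: "(\<lambda>h. \<psi> h - \<psi> 0) \<in> O[at_right 0](\<lambda>h. h)"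
    by (rule has_real_derivative_imp_bigo)
  have "(\<lambda>h. (\<phi> h - \<phi> 0) + \<phi> 0) \<in> O[at_right 0](\<lambda>_. 1)"
    by (rule sum_in_bigo(1)[OF landau_o.big_trans[OF \<phi>_lin power_bigo_one[of 1, unfolded power_one_right]]])
      simp
  then show "(\<lambda>h. Db (u x) (u (x + h))) \<in> O[at_right 0](\<lambda>_. 1)"
    by (simp add: \<phi>_def)
  have "(\<lambda>h. (\<phi> h - \<phi> 0) - (\<psi> h - \<psi> 0)) \<in> O[at_right 0](\<lambda>h. h)"
    by (rule sum_in_bigo(2)[OF \<phi>_lin \<psi>_lin])
  then show "(\<lambda>h. Db (u x) (u (x + h)) - Db (u (x - h)) (u x)) \<in> O[at_right 0](\<lambda>h. h)"
    by (simp add: \<phi>_def \<psi>_def)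
qed

lemma forward_diff_taylor_bigo:
  fixes G :: "nat \<Rightarrow> real \<Rightarrow> real"
  assumes G: "\<And>m y. (G m has_real_derivative G (Suc m) y) (at y)"
  shows "(\<lambda>h. forward_diff 5 (\<lambda>t. G 0 (x + t * h)) (-3)) \<in> O[at_right 0](\<lambda>h. h ^ 5)"
    and "(\<lambda>h. forward_diff 6 (\<lambda>t. G 0 (x + t * h)) (-3)) \<in> O[at_right 0](\<lambda>h. h ^ 6)"
proof -
  define a where "a m = G m x / fact m" for m
  define p where "p h t = (\<Sum>m<6. a m * (t * h) ^ m)" for h t
  have quintic: "p h t = a 0 + (a 1 * h) * t + (a 2 * h ^ 2) * t ^ 2 + (a 3 * h ^ 3) * t ^ 3
                  + (a 4 * h ^ 4) * t ^ 4 + (a 5 * h ^ 5) * t ^ 5" for h t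
    by (simp add: p_def eval_nat_numeral algebra_simps)
  have agree: "agree_upto 6 (\<lambda>h. forward_diff m (\<lambda>t. G 0 (x + t * h)) y) (\<lambda>h. forward_diff m (p h) y)" for m y
    using agree_upto_forward_diff[of 6 "\<lambda>h t. G 0 (x + t * h)" p] taylor_agree_upto[of G, OF G]
    unfolding p_def a_def by simp
  have "(\<lambda>h. forward_diff 5 (\<lambda>t. G 0 (x + t * h)) (-3) - 120 * (a 5 * h ^ 5)) \<in> O[at_right 0](\<lambda>h. h ^ 6)"
    using agree[of 5 "-3"] unfolding agree_upto_def forward_diff_quintic(1)[OF quintic] by blast
  then have "(\<lambda>h. (forward_diff 5 (\<lambda>t. G 0 (x + t * h)) (-3) - 120 * (a 5 * h ^ 5)) + 120 * (a 5 * h ^ 5))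
      \<in> O[at_right 0](\<lambda>h. h ^ 5)"
    by (rule sum_in_bigo(1)[OF landau_o.big_trans[OF _ power_bigo_power]]) simp_all
  then show "(\<lambda>h. forward_diff 5 (\<lambda>t. G 0 (x + t * h)) (-3)) \<in> O[at_right 0](\<lambda>h. h ^ 5)"
    by simp
  show "(\<lambda>h. forward_diff 6 (\<lambda>t. G 0 (x + t * h)) (-3)) \<in> O[at_right 0](\<lambda>h. h ^ 6)"
    using agree[of 6 "-3"] unfolding agree_upto_def forward_diff_quintic(2)[OF quintic] by simp
qed

(* The two dissipative face terms differ by Db_0 (J_0 - J_(-1)) + (Db_0 - Db_(-1)) J_(-1), with
   J_0 - J_(-1) a sixth difference. *)
lemma qfsr5_dissipation_bigo:
  fixes Db :: "real \<Rightarrow> real \<Rightarrow> real" and G :: "nat \<Rightarrow> real \<Rightarrow> real"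
  assumes G: "\<And>m y. (G m has_real_derivative G (Suc m) y) (at y)"
    and Db_a: "\<And>a b. ((\<lambda>s. Db s b) has_real_derivative Db_a a b) (at a)"
    and Db_b: "\<And>a b. ((\<lambda>t. Db a t) has_real_derivative Db_b a b) (at b)"
  shows "(\<lambda>h. Db (G 0 x) (G 0 (x + h)) * forward_diff 5 (\<lambda>t. G 0 (x + t * h)) (-2)
            - Db (G 0 (x - h)) (G 0 x) * forward_diff 5 (\<lambda>t. G 0 (x + t * h)) (-3))
         \<in> O[at_right 0](\<lambda>h. h ^ 6)"
proof -
  note coeff = qfsr5_dissipation_coefficients[OF G[of 0 x] Db_a Db_b]
  note diff = forward_diff_taylor_bigo[where G = G and x = x, OF G]
  have "(\<lambda>h. forward_diff 6 (\<lambda>t. G 0 (x + t * h)) (-3) * Db (G 0 x) (G 0 (x + h))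
            + (Db (G 0 x) (G 0 (x + h)) - Db (G 0 (x - h)) (G 0 x))
              * forward_diff 5 (\<lambda>t. G 0 (x + t * h)) (-3))
         \<in> O[at_right 0](\<lambda>h. h ^ 6)"
    using landau_o.big.mult[OF coeff(2) diff(1)]
    by (intro sum_in_bigo landau_o.big_1_mult[OF diff(2) coeff(1)]) (simp add: power_Suc[symmetric])
  then show ?thesis
    by (simp add: algebra_simps eval_nat_numeral)
qed

lemma qfsr5_residual_split:
  assumes "h \<noteq> 0"
  shows "qfsr5_residual f Db u x h - c =
    ((qfsr_flux (1/3) (-2/3) (2/3) (2/15) (16/45) (4/5) f (\<lambda>_ _. 0) u h x 0
      - qfsr_flux (1/3) (-2/3) (2/3) (2/15) (16/45) (4/5) f (\<lambda>_ _. 0) u h x (-1) - h * c)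
     - (Db (u x) (u (x + h)) * forward_diff 5 (\<lambda>t. u (x + t * h)) (-2)
        - Db (u (x - h)) (u x) * forward_diff 5 (\<lambda>t. u (x + t * h)) (-3)) / 48) / h"
proof -
  have face0: "qfsr_flux (1/3) (-2/3) (2/3) (2/15) (16/45) (4/5) f Db u h x 0
      = qfsr_flux (1/3) (-2/3) (2/3) (2/15) (16/45) (4/5) f (\<lambda>_ _. 0) u h x 0
        - Db (u x) (u (x + h)) * forward_diff 5 (\<lambda>t. u (x + t * h)) (-2) / 48"
    using qfsr5_flux_split[OF assms, where Db = Db and j = 0] by (simp add: nodal_def)
  have face1: "qfsr_flux (1/3) (-2/3) (2/3) (2/15) (16/45) (4/5) f Db u h x (-1)
      = qfsr_flux (1/3) (-2/3) (2/3) (2/15) (16/45) (4/5) f (\<lambda>_ _. 0) u h x (-1)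
        - Db (u (x - h)) (u x) * forward_diff 5 (\<lambda>t. u (x + t * h)) (-3) / 48"
    using qfsr5_flux_split[OF assms, where Db = Db and j = "-1"] by (simp add: nodal_def)
  show ?thesis
    unfolding qfsr5_residual_def face0 face1 using assms by (simp add: field_simps)
qed

lemma qfsr5_consistency:
  fixes f :: "real \<Rightarrow> real" and Db :: "real \<Rightarrow> real \<Rightarrow> real" and G :: "nat \<Rightarrow> real \<Rightarrow> real"
  assumes f: "\<And>v. f v = \<alpha> + \<beta> * v + \<gamma> * v\<^sup>2"
    and G: "\<And>m y. (G m has_real_derivative G (Suc m) y) (at y)"
    and Db_a: "\<And>a b. ((\<lambda>s. Db s b) has_real_derivative Db_a a b) (at a)"
    and Db_b: "\<And>a b. ((\<lambda>t. Db a t) has_real_derivative Db_b a b) (at b)"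
  shows "(\<lambda>h. qfsr5_residual f Db (G 0) x h - (\<beta> + 2 * \<gamma> * G 0 x) * G 1 x)
           \<in> O[at_right 0](\<lambda>h. h ^ 5)"
proof -
  have "(\<lambda>h. qfsr_flux (1/3) (-2/3) (2/3) (2/15) (16/45) (4/5) f (\<lambda>_ _. 0) (G 0) h x 0
      - qfsr_flux (1/3) (-2/3) (2/3) (2/15) (16/45) (4/5) f (\<lambda>_ _. 0) (G 0) h x (-1)
      - h * ((\<beta> + 2 * \<gamma> * G 0 x) * G 1 x)) \<in> O[at_right 0](\<lambda>h. h ^ 6)" (is "?N \<in> _")
    by (rule qfsr5_central_consistency[where f = f and G = G, OF f G])
  moreover have "(\<lambda>h. Db (G 0 x) (G 0 (x + h)) * forward_diff 5 (\<lambda>t. G 0 (x + t * h)) (-2)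
      - Db (G 0 (x - h)) (G 0 x) * forward_diff 5 (\<lambda>t. G 0 (x + t * h)) (-3)) \<in> O[at_right 0](\<lambda>h. h ^ 6)"
    (is "?D \<in> _")
    by (rule qfsr5_dissipation_bigo[where G = G and Db = Db, OF G Db_a Db_b])
  then have "(\<lambda>h. ?D h / 48) \<in> O[at_right 0](\<lambda>h. h ^ 6)"
    by simp
  ultimately have "(\<lambda>h. ?N h - ?D h / 48) \<in> O[at_right 0](\<lambda>h. h ^ Suc 5)"
    by (simp add: sum_in_bigo(2))
  then have "(\<lambda>h. (?N h - ?D h / 48) / h) \<in> O[at_right 0](\<lambda>h. h ^ 5)"
    by (rule bigo_divide_by_var)
  moreover have "eventually (\<lambda>h. qfsr5_residual f Db (G 0) x h - (\<beta> + 2 * \<gamma> * G 0 x) * G 1 x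
      = (?N h - ?D h / 48) / h) (at_right 0)"
    using eventually_at_right_less[of "0::real"]
    by eventually_elim (rule qfsr5_residual_split, simp)
  ultimately show ?thesis
    by (simp add: landau_o.big.in_cong)
qed

theorem mainTheorem8:
  fixes f D :: "real \<Rightarrow> real" and Db :: "real \<Rightarrow> real \<Rightarrow> real" and u :: "real \<Rightarrow> real"
    and x :: real
  assumes f_quad: "\<exists>\<alpha> \<beta> \<gamma> :: real. \<forall>v. f v = \<alpha> + \<beta> * v + \<gamma> * v^2"
    and D_smooth: "smooth1 D"
    and Db_smooth: "smooth2 Db"
    and Db_sym: "\<forall>v w. Db v w = Db w v"
    and Db_diag: "\<forall>v. Db v v = D v"
    and u_smooth: "smooth1 u"
  shows "(\<lambda>h. qfsr5_residual f Db u x h - deriv (\<lambda>y. f (u y)) x) \<in> O[at_right 0](\<lambda>h. h ^ 5)"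
proof -
  obtain \<alpha> \<beta> \<gamma> where f: "\<And>v. f v = \<alpha> + \<beta> * v + \<gamma> * v\<^sup>2"
    using f_quad by blast
  obtain G where G0: "G 0 = u" and G: "\<And>n y. (G n has_real_derivative G (Suc n) y) (at y)"
    using u_smooth unfolding smooth1_def by blast
  obtain P where "P 0 0 = Db"
    and "\<forall>m n a b. ((\<lambda>s. P m n s b) has_real_derivative P (Suc m) n a b) (at a) \<and>
                  ((\<lambda>t. P m n a t) has_real_derivative P m (Suc n) a b) (at b)"
    using Db_smooth unfolding smooth2_def by blast
  then have Db_a: "\<And>a b. ((\<lambda>s. Db s b) has_real_derivative P 1 0 a b) (at a)"
    and Db_b: "\<And>a b. ((\<lambda>t. Db a t) has_real_derivative P 0 1 a b) (at b)"
    by auto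
  have "(f has_real_derivative \<beta> + 2 * \<gamma> * u x) (at (u x))"
    unfolding f[abs_def] by (auto intro!: derivative_eq_intros)
  moreover have "(u has_real_derivative G 1 x) (at x)"
    using G[of 0 x] unfolding G0 by simp
  ultimately have "deriv (\<lambda>y. f (u y)) x = (\<beta> + 2 * \<gamma> * u x) * G 1 x"
    by (intro DERIV_imp_deriv DERIV_chain2)
  with qfsr5_consistency[where f = f and G = G and Db = Db, OF f G Db_a Db_b, of x] show ?thesis
    unfolding G0 by simp
qed

end
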